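(* Let $\mathcal O^\vee_q$ be the algebra defined in the context, with degrees and subspaces $\mathcal O^\vee_d$ as defined there. For every $d\in\mathbb N$, the subspace $\mathcal O^\vee_d$ is spanned by the products $a_1a_2\cdots a_n$ of essential generators such that both (i) $n\in\mathbb N$ and $\sum_{i=1}^n\deg(a_i)\le d$; and (ii) for $2\le i\le n$, $\deg(a_i)=1$ implies $\deg(a_{i-1})=1$.
   Context: All algebras are associative and unital over a field $\mathbb F$; $q\in\mathbb F$ is nonzero and not a root of unity. For elements $X,Y$ of an algebra, $[X,Y]=XY-YX$ and $[X,Y]_q=qXY-q^{-1}YX$. The algebra $\mathcal O^\vee_q$ is defined by generators (called essential generators) $\mathcal W_0,\mathcal W_1,\{\tilde{\mathcal G}_{k+1}\}_{k\in\mathbb N}$ and relations: $[\mathcal W_0,[\mathcal W_0,[\mathcal W_0,\mathcal W_1]_q]_{q^{-1}}]=(q^2-q^{-2})^2[\mathcal W_1,\mathcal W_0]$; $[\mathcal W_1,[\mathcal W_1,[\mathcal W_1,\mathcal W_0]_q]_{q^{-1}}]=(q^2-q^{-2})^2[\mathcal W_0,\mathcal W_1]$; $[\mathcal W_0,\tilde{\mathcal G}_1]=[\mathcal W_0,[\mathcal W_0,\mathcal W_1]_q]$; $[\tilde{\mathcal G}_1,\mathcal W_1]=[[\mathcal W_0,\mathcal W_1]_q,\mathcal W_1]$; for $k\ge1$: $[\tilde{\mathcal G}_{k+1},\mathcal W_0]=(q^2-q^{-2})^{-2}[\mathcal W_0,[\mathcal W_0,[\mathcal W_1,\tilde{\mathcal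 G}_k]_q]_q]$; for $k\ge1$: $[\mathcal W_1,\tilde{\mathcal G}_{k+1}]=(q^2-q^{-2})^{-2}[[[\tilde{\mathcal G}_k,\mathcal W_0]_q,\mathcal W_1]_q,\mathcal W_1]$; for $k,\ell\in\mathbb N$: $[\tilde{\mathcal G}_{k+1},\tilde{\mathcal G}_{\ell+1}]=0$. Assign degrees $\deg\mathcal W_0=\deg\mathcal W_1=1$ and $\deg\tilde{\mathcal G}_{k+1}=2k+2$ ($k\in\mathbb N$). For $d\in\mathbb N$, $\mathcal O^\vee_d$ is the subspace of $\mathcal O^\vee_q$ spanned by the products $a_1\cdots a_n$ ($n\in\mathbb N$, empty product $=1$) of essential generators with $\sum_i\deg(a_i)\le d$. *)

theory Defs
  imports Main "HOL-Library.Function_Algebras"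
begin

text \<open>Essential generators: W0, W1 and Gt k standing for the generator G~_{k+1} (k in N).\<close>
datatype gen = W0 | W1 | Gt nat

fun deg :: "gen \<Rightarrow> nat" where
  "deg W0 = 1" | "deg W1 = 1" | "deg (Gt k) = 2 * k + 2"

definition deg_word :: "gen list \<Rightarrow> nat" where
  "deg_word w = sum_list (map deg w)"

text \<open>Condition (ii): for 2 <= i <= n, deg a_i = 1 implies deg a_{i-1} = 1 (0-based indices here).\<close>
definition good :: "gen list \<Rightarrow> bool" where
  "good w \<longleftrightarrow> (\<forall>i. 1 \<le> i \<and> i < length w \<and> deg (w ! i) = 1 \<longrightarrow> deg (w ! (i - 1)) = 1)"

text \<open>The free algebra on the essential generators: elements are coefficient functions on
  words (only finitely supported ones arise below); words are the basis elements.\<close>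
definition word :: "gen list \<Rightarrow> gen list \<Rightarrow> 'a::field" where
  "word w = (\<lambda>u. if u = w then 1 else 0)"

definition fmul :: "(gen list \<Rightarrow> 'a::field) \<Rightarrow> (gen list \<Rightarrow> 'a) \<Rightarrow> gen list \<Rightarrow> 'a" where
  "fmul p r = (\<lambda>w. \<Sum>i\<le>length w. p (take i w) * r (drop i w))"

definition smul :: "'a::field \<Rightarrow> (gen list \<Rightarrow> 'a) \<Rightarrow> gen list \<Rightarrow> 'a" where
  "smul c p = (\<lambda>w. c * p w)"

definition comm :: "(gen list \<Rightarrow> 'a::field) \<Rightarrow> (gen list \<Rightarrow> 'a) \<Rightarrow> gen list \<Rightarrow> 'a" where
  "comm x y = fmul x y - fmul y x"

definition qcomm :: "'a::field \<Rightarrow> (gen list \<Rightarrow> 'a) \<Rightarrow> (gen list \<Rightarrow> 'a) \<Rightarrow> gen list \<Rightarrow> 'a" where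
  "qcomm q x y = smul q (fmul x y) - smul (inverse q) (fmul y x)"

definition gW0 :: "gen list \<Rightarrow> 'a::field" where "gW0 = word [W0]"
definition gW1 :: "gen list \<Rightarrow> 'a::field" where "gW1 = word [W1]"
definition gG :: "nat \<Rightarrow> gen list \<Rightarrow> 'a::field" where "gG k = word [Gt k]"

text \<open>Relators (each "lhs - rhs") of O^vee_q.\<close>
inductive relator :: "'a::field \<Rightarrow> (gen list \<Rightarrow> 'a) \<Rightarrow> bool" for q where
  r1: "relator q (comm gW0 (qcomm (inverse q) gW0 (qcomm q gW0 gW1))
          - smul ((q^2 - inverse q ^ 2)^2) (comm gW1 gW0))"
| r2: "relator q (comm gW1 (qcomm (inverse q) gW1 (qcomm q gW1 gW0))
          - smul ((q^2 - inverse q ^ 2)^2) (comm gW0 gW1))"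
| r3: "relator q (comm gW0 (gG 0) - comm gW0 (qcomm q gW0 gW1))"
| r4: "relator q (comm (gG 0) gW1 - comm (qcomm q gW0 gW1) gW1)"
| r5: "k \<ge> 1 \<Longrightarrow> relator q (comm (gG k) gW0
          - smul (inverse ((q^2 - inverse q ^ 2)^2)) (comm gW0 (qcomm q gW0 (qcomm q gW1 (gG (k - 1))))))"
| r6: "k \<ge> 1 \<Longrightarrow> relator q (comm gW1 (gG k)
          - smul (inverse ((q^2 - inverse q ^ 2)^2)) (comm (qcomm q (qcomm q (gG (k - 1)) gW0) gW1) gW1))"
| r7: "relator q (comm (gG k) (gG l))"

inductive_set rel_ideal :: "'a::field \<Rightarrow> (gen list \<Rightarrow> 'a) set" for q where
  gen: "relator q r \<Longrightarrow> r \<in> rel_ideal q"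
| zero: "0 \<in> rel_ideal q"
| add: "x \<in> rel_ideal q \<Longrightarrow> y \<in> rel_ideal q \<Longrightarrow> x + y \<in> rel_ideal q"
| scale: "x \<in> rel_ideal q \<Longrightarrow> smul c x \<in> rel_ideal q"
| lmul: "x \<in> rel_ideal q \<Longrightarrow> fmul (word u) x \<in> rel_ideal q"
| rmul: "x \<in> rel_ideal q \<Longrightarrow> fmul x (word u) \<in> rel_ideal q"

definition word_span :: "gen list set \<Rightarrow> (gen list \<Rightarrow> 'a::field) set" where
  "word_span S = {x. \<exists>T c. finite T \<and> T \<subseteq> S \<and> x = (\<lambda>u. \<Sum>w\<in>T. c w * word w u)}"

text \<open>Preimage in the free algebra of the subspace of O^vee_q spanned by the words in S.\<close>
definition span_mod :: "'a::field \<Rightarrow> gen list set \<Rightarrow> (gen list \<Rightarrow> 'a) set" where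
  "span_mod q S = {x. \<exists>y\<in>word_span S. x - y \<in> rel_ideal q}"

end

theory Submission
  imports Defs "HOL.Modules"
begin

text \<open>
  Call the total degree of the letters G in a word its G-degree. All relations are
  homogeneous for the bigrading by degree and G-degree, and those involving a generator G
  of degree 2k+2 say that its commutator with W0 or W1 is congruent to a combination of
  words of degree 2k+3 and G-degree only 2k. Hence a word that is not good, i.e. that
  contains a factor G W, is congruent to the word with this factor swapped, which has fewer
  inversions (pairs of a letter G before a letter W), plus words of the same degree and
  smaller G-degree. Induction on the G-degree and then on the number of inversions rewrites
  every word into good words of no larger degree.
\<close>

interpretation free: module "smul :: 'a::field \<Rightarrow> (gen list \<Rightarrow> 'a) \<Rightarrow> gen list \<Rightarrow> 'a"
  by unfold_locales (auto simp: smul_def algebra_simps)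

lemma sum_fun_apply: "(\<Sum>a\<in>A. f a) x = (\<Sum>a\<in>A. f a x)"
  by (induction A rule: infinite_finite_induct) auto

lemma inj_word: "inj word"
  by (rule injI) (metis word_def zero_neq_one)

lemma word_span_eq_span: "word_span S = (free.span (word ` S) :: (gen list \<Rightarrow> 'a::field) set)"
proof (intro equalityI subsetI)
  fix x :: "gen list \<Rightarrow> 'a" assume "x \<in> word_span S"
  then obtain T c where T: "finite T" "T \<subseteq> S" and x: "x = (\<lambda>u. \<Sum>w\<in>T. c w * word w u)"
    unfolding word_span_def by blast
  have "x = (\<Sum>w\<in>T. smul (c w) (word w))"
    unfolding x by (auto simp: sum_fun_apply smul_def)
  also have "\<dots> \<in> free.span (word ` S)"
    using T(2) by (blast intro: free.span_sum free.span_scale free.span_base)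
  finally show "x \<in> free.span (word ` S)" .
next
  fix x :: "gen list \<Rightarrow> 'a" assume "x \<in> free.span (word ` S)"
  then obtain t r where t: "finite t" "t \<subseteq> word ` S" and x: "x = (\<Sum>a\<in>t. smul (r a) a)"
    unfolding free.span_explicit by blast
  obtain T where T: "T \<subseteq> S" "finite T" "t = word ` T"
    using finite_subset_image[OF t] by blast
  have "x = (\<Sum>w\<in>T. smul (r (word w)) (word w))"
    unfolding x T(3) by (simp add: sum.reindex[OF inj_on_subset[OF inj_word subset_UNIV]])
  also have "\<dots> = (\<lambda>u. \<Sum>w\<in>T. r (word w) * word w u)"
    by (auto simp: sum_fun_apply smul_def)
  finally show "x \<in> word_span S"
    unfolding word_span_def using T(1,2) by (intro CollectI exI[of _ T] exI[of _ "r \<circ> word"]) simp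
qed

lemma subspace_rel_ideal: "free.subspace (rel_ideal q)"
  by (rule free.subspaceI) (auto intro: rel_ideal.intros)

lemma span_mod_eq_span:
  fixes q :: "'a::field"
  shows "span_mod q S = free.span (word ` S \<union> rel_ideal q)"
proof -
  have span_ideal: "free.span (rel_ideal q) = rel_ideal q"
    using subspace_rel_ideal by simp
  have "free.span (word ` S \<union> rel_ideal q) = {y + r |y r. y \<in> free.span (word ` S) \<and> r \<in> rel_ideal q}"
    unfolding free.span_Un span_ideal ..
  also have "\<dots> = span_mod q S"
    unfolding span_mod_def word_span_eq_span
  proof safe
    fix y r :: "gen list \<Rightarrow> 'a" assume "y \<in> free.span (word ` S)" "r \<in> rel_ideal q"
    then show "\<exists>y'\<in>free.span (word ` S). y + r - y' \<in> rel_ideal q"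
      by (intro bexI[of _ y]) simp_all
  next
    fix x y :: "gen list \<Rightarrow> 'a" assume "y \<in> free.span (word ` S)" "x - y \<in> rel_ideal q"
    then show "\<exists>y' r. x = y' + r \<and> y' \<in> free.span (word ` S) \<and> r \<in> rel_ideal q"
      by (intro exI[of _ y] exI[of _ "x - y"]) simp
  qed
  finally show ?thesis ..
qed

lemma fmul_word_word: "fmul (word u) (word v) = word (u @ v)"
proof
  fix w :: "gen list"
  have split_iff: "take i w = u \<and> drop i w = v \<longleftrightarrow> i = length u \<and> w = u @ v" if "i \<le> length w" for i
    using that by (auto simp: append_eq_conv_conj)
  have "fmul (word u) (word v) w = (\<Sum>i\<le>length w. if i = length u \<and> w = u @ v then 1 else 0)"
    unfolding fmul_def word_def by (rule sum.cong) (use split_iff in auto)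
  also have "\<dots> = word (u @ v) w"
    by (cases "w = u @ v") (auto simp: word_def)
  finally show "fmul (word u) (word v) w = word (u @ v) w" .
qed

lemma fmul_add_left: "fmul (x + y) z = fmul x z + fmul y z"
  unfolding fmul_def by (auto simp: distrib_right sum.distrib)

lemma fmul_add_right: "fmul x (y + z) = fmul x y + fmul x z"
  unfolding fmul_def by (auto simp: distrib_left sum.distrib)

lemma fmul_diff_left: "fmul (x - y) z = fmul x z - fmul y z"
  unfolding fmul_def by (auto simp: left_diff_distrib sum_subtractf)

lemma fmul_diff_right: "fmul x (y - z) = fmul x y - fmul x z"
  unfolding fmul_def by (auto simp: right_diff_distrib sum_subtractf)

lemma fmul_smul_left: "fmul (smul c x) z = smul c (fmul x z)"
  unfolding fmul_def smul_def by (auto simp: sum_distrib_left mult.assoc)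

lemma fmul_smul_right: "fmul x (smul c z) = smul c (fmul x z)"
  unfolding fmul_def smul_def by (auto simp: sum_distrib_left mult_ac)

lemma fmul_zero_left: "fmul 0 z = 0"
  and fmul_zero_right: "fmul x 0 = 0"
  unfolding fmul_def by auto

lemma fmul_span_words:
  assumes "x \<in> free.span (word ` A)" and "y \<in> free.span (word ` B)"
  shows "fmul x y \<in> free.span (word ` {u @ v |u v. u \<in> A \<and> v \<in> B})"
proof -
  let ?V = "free.span (word ` {u @ v |u v. u \<in> A \<and> v \<in> B})"
  have word_left: "fmul (word u) y \<in> ?V" if "u \<in> A" for u
    using assms(2)
  proof (induction rule: free.span_induct)
    case base
    show ?case
      by (rule free.subspaceI)
        (auto simp: fmul_zero_right fmul_add_right fmul_smul_right
          intro: free.span_zero free.span_add free.span_scale)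
  next
    case (step y)
    then obtain v where "v \<in> B" "y = word v"
      by blast
    then show ?case
      using that by (auto simp: fmul_word_word intro!: free.span_base)
  qed
  show ?thesis
    using assms(1)
  proof (induction rule: free.span_induct)
    case base
    show ?case
      by (rule free.subspaceI)
        (auto simp: fmul_zero_left fmul_add_left fmul_smul_left
          intro: free.span_zero free.span_add free.span_scale)
  next
    case (step x)
    then obtain u where "u \<in> A" "x = word u"
      by blast
    then show ?case
      using word_left by simp
  qed
qed

definition gdeg_word :: "gen list \<Rightarrow> nat" where
  "gdeg_word w = deg_word (filter (\<lambda>a. deg a \<noteq> 1) w)"

definition homogeneous :: "nat \<Rightarrow> nat \<Rightarrow> (gen list \<Rightarrow> 'a::field) set" where
  "homogeneous D G = free.span (word ` {w. deg_word w = D \<and> gdeg_word w = G})"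

lemma deg_word_append: "deg_word (u @ v) = deg_word u + deg_word v"
  by (simp add: deg_word_def)

lemma gdeg_word_append: "gdeg_word (u @ v) = gdeg_word u + gdeg_word v"
  by (simp add: gdeg_word_def deg_word_append)

lemma word_homogeneous: "word w \<in> homogeneous (deg_word w) (gdeg_word w)"
  unfolding homogeneous_def by (rule free.span_base) simp

lemma fmul_homogeneous:
  assumes "x \<in> homogeneous D1 G1" and "y \<in> homogeneous D2 G2"
    and "D = D1 + D2" and "G = G1 + G2"
  shows "fmul x y \<in> homogeneous D G"
proof -
  have "{u @ v |u v. u \<in> {w. deg_word w = D1 \<and> gdeg_word w = G1} \<and> v \<in> {w. deg_word w = D2 \<and> gdeg_word w = G2}}
      \<subseteq> {w. deg_word w = D \<and> gdeg_word w = G}"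
    using assms(3,4) by (auto simp: deg_word_append gdeg_word_append)
  then show ?thesis
    using fmul_span_words[OF assms(1,2)[unfolded homogeneous_def]] free.span_mono[OF image_mono]
    unfolding homogeneous_def by blast
qed

lemma comm_homogeneous:
  assumes "x \<in> homogeneous D1 G1" and "y \<in> homogeneous D2 G2"
    and "D = D1 + D2" and "G = G1 + G2"
  shows "comm x y \<in> homogeneous D G"
proof -
  have "fmul x y \<in> homogeneous D G" "fmul y x \<in> homogeneous D G"
    by (rule fmul_homogeneous[OF assms(1,2)]; simp add: assms)
      (rule fmul_homogeneous[OF assms(2,1)]; simp add: assms)
  then show ?thesis
    unfolding comm_def homogeneous_def by (intro free.span_diff)
qed

lemma qcomm_homogeneous:
  assumes "x \<in> homogeneous D1 G1" and "y \<in> homogeneous D2 G2"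
    and "D = D1 + D2" and "G = G1 + G2"
  shows "qcomm q x y \<in> homogeneous D G"
proof -
  have "fmul x y \<in> homogeneous D G" "fmul y x \<in> homogeneous D G"
    by (rule fmul_homogeneous[OF assms(1,2)]; simp add: assms)
      (rule fmul_homogeneous[OF assms(2,1)]; simp add: assms)
  then show ?thesis
    unfolding qcomm_def homogeneous_def by (intro free.span_diff free.span_scale)
qed

lemma gW0_homogeneous: "gW0 \<in> homogeneous 1 0"
  and gW1_homogeneous: "gW1 \<in> homogeneous 1 0"
  and gG_homogeneous: "gG k \<in> homogeneous (2 * k + 2) (2 * k + 2)"
  unfolding gW0_def gW1_def gG_def
  using word_homogeneous[of "[W0]"] word_homogeneous[of "[W1]"] word_homogeneous[of "[Gt k]"]
  by (simp_all add: deg_word_def gdeg_word_def)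

lemma comm_gG_word: "comm (gG k) (word [x]) = word [Gt k, x] - word [x, Gt k]"
  by (simp add: comm_def gG_def fmul_word_word)

lemma comm_antisym: "comm x y = - comm y x"
  by (simp add: comm_def)

lemma comm_gG0_W_mod_rel_ideal:
  fixes q :: "'a::field"
  assumes "deg x = 1"
  shows "\<exists>z \<in> homogeneous 3 0. comm (gG 0) (word [x]) - z \<in> (rel_ideal q :: (gen list \<Rightarrow> 'a) set)"
proof -
  have C: "qcomm q gW0 gW1 \<in> homogeneous 2 0"
    by (rule qcomm_homogeneous[OF gW0_homogeneous gW1_homogeneous]) simp_all
  have "x = W0 \<or> x = W1"
    using assms by (cases x) auto
  then show ?thesis
  proof
    assume x: "x = W0"
    let ?z = "- comm gW0 (qcomm q gW0 gW1)"
    have "comm (gG 0) (word [x]) - ?z = - (comm gW0 (gG 0) - comm gW0 (qcomm q gW0 gW1))"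
      by (simp add: x gW0_def comm_antisym[of "gG 0"])
    then have "comm (gG 0) (word [x]) - ?z \<in> rel_ideal q"
      using free.subspace_neg[OF subspace_rel_ideal rel_ideal.gen[OF relator.r3]] by simp
    moreover have "?z \<in> homogeneous 3 0"
      using comm_homogeneous[OF gW0_homogeneous C, of 3 0] unfolding homogeneous_def
      by (intro free.span_neg) simp
    ultimately show ?thesis
      by blast
  next
    assume x: "x = W1"
    let ?z = "comm (qcomm q gW0 gW1) gW1"
    have "comm (gG 0) (word [x]) - ?z \<in> rel_ideal q"
      using rel_ideal.gen[OF relator.r4] by (simp add: x gW1_def)
    moreover have "?z \<in> homogeneous 3 0"
      by (rule comm_homogeneous[OF C gW1_homogeneous]) simp_all
    ultimately show ?thesis
      by blast
  qed
qed

lemma comm_gGSuc_W_mod_rel_ideal: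
  fixes q :: "'a::field"
  assumes "deg x = 1"
  shows "\<exists>z \<in> homogeneous (2 * Suc j + 3) (2 * Suc j).
    comm (gG (Suc j)) (word [x]) - z \<in> (rel_ideal q :: (gen list \<Rightarrow> 'a) set)"
proof -
  define c :: 'a where "c = inverse ((q^2 - inverse q ^ 2)^2)"
  have "x = W0 \<or> x = W1"
    using assms by (cases x) auto
  then show ?thesis
  proof
    assume x: "x = W0"
    let ?z = "smul c (comm gW0 (qcomm q gW0 (qcomm q gW1 (gG j))))"
    have "comm (gG (Suc j)) (word [x]) - ?z \<in> rel_ideal q"
      using rel_ideal.gen[OF relator.r5[of "Suc j" q]] by (simp add: x c_def gW0_def)
    moreover have "?z \<in> homogeneous (2 * Suc j + 3) (2 * Suc j)"
      unfolding homogeneous_def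
      by (intro free.span_scale comm_homogeneous[OF gW0_homogeneous
            qcomm_homogeneous[OF gW0_homogeneous qcomm_homogeneous[OF gW1_homogeneous gG_homogeneous]],
            unfolded homogeneous_def]) simp_all
    ultimately show ?thesis
      by blast
  next
    assume x: "x = W1"
    let ?T = "comm (qcomm q (qcomm q (gG j) gW0) gW1) gW1"
    have "comm (gG (Suc j)) (word [x]) + smul c ?T = - (comm gW1 (gG (Suc j)) - smul c ?T)"
      by (simp add: x gW1_def comm_antisym[of "gG (Suc j)"])
    then have "comm (gG (Suc j)) (word [x]) - - smul c ?T \<in> rel_ideal q"
      using free.subspace_neg[OF subspace_rel_ideal rel_ideal.gen[OF relator.r6[of "Suc j" q]]]
      by (simp add: c_def)
    moreover have "- smul c ?T \<in> homogeneous (2 * Suc j + 3) (2 * Suc j)"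
      unfolding homogeneous_def
      by (intro free.span_neg free.span_scale comm_homogeneous[OF
            qcomm_homogeneous[OF qcomm_homogeneous[OF gG_homogeneous gW0_homogeneous] gW1_homogeneous]
            gW1_homogeneous, unfolded homogeneous_def]) simp_all
    ultimately show ?thesis
      by blast
  qed
qed

lemma comm_gG_W_mod_rel_ideal:
  fixes q :: "'a::field"
  assumes "deg x = 1"
  shows "\<exists>z \<in> homogeneous (2 * k + 3) (2 * k).
    comm (gG k) (word [x]) - z \<in> (rel_ideal q :: (gen list \<Rightarrow> 'a) set)"
  using comm_gG0_W_mod_rel_ideal[OF assms] comm_gGSuc_W_mod_rel_ideal[OF assms]
  by (cases k) simp_all

fun inversions :: "gen list \<Rightarrow> nat" where
  "inversions [] = 0"
| "inversions (a # w) =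
    (if deg a = 1 then 0 else length (filter (\<lambda>b. deg b = 1) w)) + inversions w"

lemma inversions_append:
  "inversions (u @ v) = inversions u + inversions v
    + length (filter (\<lambda>a. deg a \<noteq> 1) u) * length (filter (\<lambda>b. deg b = 1) v)"
  by (induction u) (auto simp: algebra_simps)

lemma inversions_swap_less:
  "deg x = 1 \<Longrightarrow> inversions (u @ x # Gt k # v) < inversions (u @ Gt k # x # v)"
  by (simp add: inversions_append)

lemma not_goodE:
  assumes "\<not> good w"
  obtains u k x v where "w = u @ Gt k # x # v" and "deg x = 1"
proof -
  obtain i where i: "1 \<le> i" "i < length w" "deg (w ! i) = 1" "deg (w ! (i - 1)) \<noteq> 1"
    using assms unfolding good_def by blast
  obtain k where k: "w ! (i - 1) = Gt k"
    using i(4) by (cases "w ! (i - 1)") auto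
  have "drop (i - 1) w = w ! (i - 1) # drop i w"
    using Cons_nth_drop_Suc[of "i - 1" w] i(1,2) by simp
  also have "\<dots> = Gt k # w ! i # drop (Suc i) w"
    using Cons_nth_drop_Suc[of i w] i(2) k by simp
  finally have "w = take (i - 1) w @ Gt k # w ! i # drop (Suc i) w"
    by (metis append_take_drop_id)
  then show ?thesis
    using i(3) that by blast
qed

lemma swap_gG_W_mod_rel_ideal:
  fixes q :: "'a::field"
  assumes "deg x = 1"
  shows "\<exists>z \<in> homogeneous (deg_word (u @ Gt k # x # v)) (gdeg_word (u @ Gt k # x # v) - 2).
    word (u @ Gt k # x # v) - word (u @ x # Gt k # v) - z \<in> (rel_ideal q :: (gen list \<Rightarrow> 'a) set)"
proof -
  obtain z where z: "z \<in> homogeneous (2 * k + 3) (2 * k)"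
    and z_rel: "comm (gG k) (word [x]) - z \<in> rel_ideal q"
    using comm_gG_W_mod_rel_ideal[OF assms] by blast
  define sandwich where "sandwich y = fmul (word u) (fmul y (word v))" for y :: "gen list \<Rightarrow> 'a"
  have "word (u @ Gt k # x # v) - word (u @ x # Gt k # v) - sandwich z
      = sandwich (comm (gG k) (word [x]) - z)"
    by (simp add: sandwich_def comm_gG_word fmul_diff_left fmul_diff_right fmul_word_word)
  also have "\<dots> \<in> rel_ideal q"
    unfolding sandwich_def by (intro rel_ideal.lmul rel_ideal.rmul z_rel)
  finally have "word (u @ Gt k # x # v) - word (u @ x # Gt k # v) - sandwich z \<in> rel_ideal q" .
  moreover have "sandwich z
      \<in> homogeneous (deg_word (u @ Gt k # x # v)) (gdeg_word (u @ Gt k # x # v) - 2)"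
    unfolding sandwich_def
    by (rule fmul_homogeneous[OF word_homogeneous fmul_homogeneous[OF z word_homogeneous]])
      (use assms in \<open>simp_all add: gdeg_word_append deg_word_append gdeg_word_def deg_word_def\<close>)
  ultimately show ?thesis
    by blast
qed

lemma word_in_span_mod_good:
  fixes q :: "'a::field"
  assumes "deg_word w \<le> d"
  shows "(word w :: gen list \<Rightarrow> 'a) \<in> span_mod q {w. deg_word w \<le> d \<and> good w}"
  using assms
proof (induction w rule: wf_induct[OF wf_measures[of "[gdeg_word, inversions]"]])
  case (1 w)
  let ?M = "span_mod q {w. deg_word w \<le> d \<and> good w} :: (gen list \<Rightarrow> 'a) set"
  have IH: "word y \<in> ?M" if "(y, w) \<in> measures [gdeg_word, inversions]" and "deg_word y \<le> d" for y
    using "1.IH" that by blast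
  have M: "free.subspace ?M" "rel_ideal q \<subseteq> ?M"
    unfolding span_mod_eq_span by (auto intro: free.span_base)
  show ?case
  proof (cases "good w")
    case True
    then show ?thesis
      using "1.prems" unfolding span_mod_eq_span by (auto intro: free.span_base)
  next
    case False
    then obtain u k x v where w: "w = u @ Gt k # x # v" and x: "deg x = 1"
      by (rule not_goodE)
    define w' where "w' = u @ x # Gt k # v"
    obtain z where z: "z \<in> homogeneous (deg_word w) (gdeg_word w - 2)"
      and z_rel: "word w - word w' - z \<in> rel_ideal q"
      using swap_gG_W_mod_rel_ideal[OF x, of u k v q] unfolding w w'_def by blast
    have "word w' \<in> ?M"
    proof (rule IH)
      show "(w', w) \<in> measures [gdeg_word, inversions]"
        using x inversions_swap_less[OF x] by (simp add: w w'_def gdeg_word_append gdeg_word_def)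
      show "deg_word w' \<le> d"
        using "1.prems" by (simp add: w w'_def deg_word_append deg_word_def)
    qed
    moreover have "homogeneous (deg_word w) (gdeg_word w - 2) \<subseteq> ?M"
      unfolding homogeneous_def
    proof (rule free.span_minimal[OF _ M(1)], safe)
      fix s assume s: "deg_word s = deg_word w" "gdeg_word s = gdeg_word w - 2"
      have "gdeg_word w \<ge> 2"
        by (simp add: w gdeg_word_append gdeg_word_def deg_word_def)
      then show "word s \<in> ?M"
        using s "1.prems" by (intro IH) simp_all
    qed
    ultimately have "word w' + z + (word w - word w' - z) \<in> ?M"
      using z z_rel M by (blast intro: free.subspace_add[OF M(1)])
    then show ?thesis
      by simp
  qed
qed

theorem proposition9p4:
  fixes q :: "'a::field" and d :: nat
  assumes "q \<noteq> 0" and "\<forall>n::nat. n > 0 \<longrightarrow> q ^ n \<noteq> 1"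
  shows "span_mod q {w. deg_word w \<le> d}
       = span_mod q {w. deg_word w \<le> d \<and> good w}"
proof -
  let ?good = "{w. deg_word w \<le> d \<and> good w}"
  have "word ` {w. deg_word w \<le> d} \<union> rel_ideal q \<subseteq> span_mod q ?good"
    using word_in_span_mod_good[of _ d q] unfolding span_mod_eq_span by (auto intro: free.span_base)
  then have "span_mod q {w. deg_word w \<le> d} \<subseteq> span_mod q ?good"
    unfolding span_mod_eq_span by (rule free.span_minimal) simp
  moreover have "span_mod q ?good \<subseteq> span_mod q {w. deg_word w \<le> d}"
    unfolding span_mod_eq_span by (rule free.span_mono) auto
  ultimately show ?thesis
    by (rule antisym)
qed

end
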